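(* Let $\varepsilon,K>0$ be constants with $\varepsilon<1/6$. Let $n$ be sufficiently large in terms of $\varepsilon,K$ and let $G$ be an $n$-vertex graph with $\Delta(G)\leq Kn^{1/3+\varepsilon}$. Suppose $G$ has $q$ copies of $C_4$ and every edge lies in at most $\frac{96\log n}{n^{4/3+\varepsilon}}q$ copies of $C_4$. Then there exist $v\in V(G)$, a positive real $s$ and a symmetric set $\mathcal{D}\subset V(G)^3$ with $|\mathcal{D}|\geq \frac{q}{n\log n}$ such that: (1) for each $(x,y,z)\in\mathcal{D}$, the vertices $v,x,y,z$ are distinct and $vx,xy,yz,zv\in E(G)$; (2) for each $(x,y,z)\in\mathcal{D}$, $d(v,y)\leq s$ and $d(x,z)\leq s$; (3) for every $x\in V(G)$, there are at most $\frac{384(\log n)q}{n^{4/3+\varepsilon}s}$ vertices $y\in V(G)$ for which some $z\in V(G)$ satisfies $(x,y,z)\in\mathcal{D}$.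
   Context: A set $\mathcal{D}$ of triples is symmetric if $(x,y,z)\in\mathcal{D}$ implies $(z,y,x)\in\mathcal{D}$. $d(u,w)$ is the codegree (number of common neighbours) of $u,w$. A copy of $C_4$ is a subgraph isomorphic to the $4$-cycle; $\log$ is the natural logarithm. *)

theory Defs
  imports Complex_Main
begin

definition simple_graph :: "'a set \<Rightarrow> ('a \<Rightarrow> 'a \<Rightarrow> bool) \<Rightarrow> bool" where
  "simple_graph V E \<longleftrightarrow> finite V \<and> (\<forall>x y. E x y \<longrightarrow> x \<in> V \<and> y \<in> V)
     \<and> (\<forall>x y. E x y \<longrightarrow> E y x) \<and> (\<forall>x. \<not> E x x)"

definition degree :: "'a set \<Rightarrow> ('a \<Rightarrow> 'a \<Rightarrow> bool) \<Rightarrow> 'a \<Rightarrow> nat" where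
  "degree V E v = card {u \<in> V. E v u}"

definition codegree :: "'a set \<Rightarrow> ('a \<Rightarrow> 'a \<Rightarrow> bool) \<Rightarrow> 'a \<Rightarrow> 'a \<Rightarrow> nat" where
  "codegree V E u w = card {x \<in> V. E u x \<and> E w x}"

text \<open>Copies of C4, each represented by its set of four edges (edges = 2-element sets).\<close>
definition C4_copies :: "'a set \<Rightarrow> ('a \<Rightarrow> 'a \<Rightarrow> bool) \<Rightarrow> 'a set set set" where
  "C4_copies V E = {{{a,b},{b,c},{c,d},{d,a}} | a b c d.
      a \<in> V \<and> b \<in> V \<and> c \<in> V \<and> d \<in> V \<and> distinct [a,b,c,d]
      \<and> E a b \<and> E b c \<and> E c d \<and> E d a}"

definition symmetric_triples :: "('a \<times> 'a \<times> 'a) set \<Rightarrow> bool" where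
  "symmetric_triples D \<longleftrightarrow> (\<forall>x y z. (x,y,z) \<in> D \<longrightarrow> (z,y,x) \<in> D)"

end

theory Submission
  imports Defs
begin

text \<open>Label each copy of \<open>C\<^sub>4\<close> as \<open>v x y z\<close> so that the diagonal \<open>vy\<close> has the
  larger codegree; every copy has at least four such labellings. Grouping the labellings by
  \<open>v\<close> and by the dyadic level \<open>k\<close> with \<open>4^(k-1) < d(v,y) \<le> 4^k\<close> gives at most
  \<open>n (log\<^sub>4 n + 2)\<close> classes, so one class \<open>D\<close> has at least \<open>q / (n log n)\<close> elements;
  take \<open>s = 4^k\<close>. For fixed \<open>x\<close>, every \<open>y\<close> occurring in \<open>D\<close> has more than \<open>4^(k-1)\<close>
  common neighbours \<open>w \<noteq> x\<close> with \<open>v\<close>, and each of them closes its own copy \<open>v x y w\<close>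
  through the edge \<open>vx\<close>; so the bound on copies of \<open>C\<^sub>4\<close> per edge bounds the number of
  such \<open>y\<close>.\<close>

lemma card_eq_sum_card_fibres:
  assumes "finite S" "finite T" "g ` S \<subseteq> T"
  shows "card S = (\<Sum>y\<in>T. card {x \<in> S. g x = y})"
  using sum.group[OF assms, of "\<lambda>_. 1::nat"] by simp

lemma exists_large_fibre:
  assumes "finite S" "finite P" "P \<noteq> {}" "g ` S \<subseteq> P"
  obtains p where "p \<in> P" "card S \<le> card P * card {x \<in> S. g x = p}"
proof -
  let ?f = "\<lambda>p. card {x \<in> S. g x = p}"
  obtain p where "p \<in> P" and p_max: "\<And>p'. p' \<in> P \<Longrightarrow> ?f p' \<le> ?f p"
    using Max_in[of "?f ` P"] Max_ge[of "?f ` P"] assms(2,3) by fastforce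
  have "card S = sum ?f P" by (rule card_eq_sum_card_fibres[OF assms(1,2,4)])
  also have "\<dots> \<le> card P * ?f p" using sum_bounded_above[of P ?f "?f p"] p_max by simp
  finally show thesis using \<open>p \<in> P\<close> that by blast
qed

definition cycle4 :: "'a \<Rightarrow> 'a \<Rightarrow> 'a \<Rightarrow> 'a \<Rightarrow> 'a set set" where
  "cycle4 a b c d = {{a,b},{b,c},{c,d},{d,a}}"

lemma cycle4_rotate: "cycle4 a b c d = cycle4 b c d a"
  unfolding cycle4_def by (simp add: insert_commute)

lemma cycle4_reverse: "cycle4 a b c d = cycle4 a d c b"
  unfolding cycle4_def by (simp add: insert_commute)

lemma C4_copiesE:
  assumes "C \<in> C4_copies V E"
  obtains a b c d where "C = cycle4 a b c d" "a \<in> V" "b \<in> V" "c \<in> V" "d \<in> V"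
    "distinct [a,b,c,d]" "E a b" "E b c" "E c d" "E d a"
  using assms unfolding C4_copies_def cycle4_def by blast

lemma cycle4_in_C4_copies:
  assumes "a \<in> V" "b \<in> V" "c \<in> V" "d \<in> V" "distinct [a,b,c,d]"
    "E a b" "E b c" "E c d" "E d a"
  shows "cycle4 a b c d \<in> C4_copies V E"
  unfolding C4_copies_def cycle4_def using assms by blast

lemma finite_C4_copies: "finite V \<Longrightarrow> finite (C4_copies V E)"
proof -
  assume "finite V"
  have "C4_copies V E \<subseteq> (\<lambda>(a,b,c,d). cycle4 a b c d) ` (V \<times> V \<times> V \<times> V)"
    by (force elim: C4_copiesE)
  then show ?thesis by (rule finite_subset) (use \<open>finite V\<close> in simp)
qed

lemma cycle4_inj:
  assumes "distinct [v,x,y,w]" "distinct [v,x,y',w']" "cycle4 v x y w = cycle4 v x y' w'"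
  shows "y = y' \<and> w = w'"
proof -
  have "{x,y} \<in> cycle4 v x y' w'" "{w,v} \<in> cycle4 v x y' w'"
    unfolding assms(3)[symmetric] by (simp_all add: cycle4_def)
  then show ?thesis using assms(1,2) by (auto simp: cycle4_def doubleton_eq_iff)
qed

lemma codegree_commute: "codegree V E a b = codegree V E b a"
  unfolding codegree_def by (simp add: conj_commute)

lemma codegree_le_card:
  "finite V \<Longrightarrow> codegree V E a b \<le> card V"
  unfolding codegree_def by (rule card_mono) auto

lemma card_mult_le_card_C4_copies_edge:
  assumes G: "simple_graph V E" and "E v x" and "Y \<subseteq> V"
    and Y: "\<And>y. y \<in> Y \<Longrightarrow> E x y \<and> y \<noteq> v \<and> m < codegree V E v y"
  shows "card Y * m \<le> card {C \<in> C4_copies V E. {v,x} \<in> C}"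
proof -
  have fin: "finite V" and sym: "\<And>a b. E a b \<Longrightarrow> E b a" and irr: "\<And>a. \<not> E a a"
    and inV: "\<And>a b. E a b \<Longrightarrow> a \<in> V \<and> b \<in> V"
    using G by (auto simp: simple_graph_def)
  define Z where "Z y = {w \<in> V. E v w \<and> E y w} - {x}" for y
  have card_Z: "m \<le> card (Z y)" if "y \<in> Y" for y
  proof -
    have "x \<in> {w \<in> V. E v w \<and> E y w}"
      using \<open>E v x\<close> Y[OF that] sym inV by blast
    then have "card (Z y) = codegree V E v y - 1"
      using fin by (simp add: Z_def codegree_def card_Diff_singleton)
    with Y[OF that] show ?thesis by arith
  qed
  have cycle: "distinct [v,x,y,w] \<and> E x y \<and> E y w \<and> E w v" if "y \<in> Y" "w \<in> Z y" for y w
  proof -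
    have "E v w" "E y w" "w \<noteq> x" "E x y" "y \<noteq> v"
      using that Y by (auto simp: Z_def)
    moreover have "v \<noteq> x" "x \<noteq> y" "v \<noteq> w" "y \<noteq> w"
      using irr \<open>E v x\<close> \<open>E x y\<close> \<open>E v w\<close> \<open>E y w\<close> by metis+
    ultimately show ?thesis using sym[of v w] by auto
  qed
  let ?f = "\<lambda>(y,w). cycle4 v x y w"
  have "inj_on ?f (Sigma Y Z)"
  proof (rule inj_onI, clarify)
    fix y w y' w' assume "y \<in> Y" "w \<in> Z y" "y' \<in> Y" "w' \<in> Z y'"
      and "cycle4 v x y w = cycle4 v x y' w'"
    then show "y = y' \<and> w = w'" by (meson cycle cycle4_inj)
  qed
  moreover have "?f ` Sigma Y Z \<subseteq> {C \<in> C4_copies V E. {v,x} \<in> C}"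
  proof clarify
    fix y w assume "y \<in> Y" "w \<in> Z y"
    with cycle[OF this] \<open>E v x\<close> inV[of v x] inV[of y w]
    have "cycle4 v x y w \<in> C4_copies V E" by (intro cycle4_in_C4_copies) auto
    then show "cycle4 v x y w \<in> C4_copies V E \<and> {v,x} \<in> cycle4 v x y w"
      by (simp add: cycle4_def)
  qed
  ultimately have "card (Sigma Y Z) \<le> card {C \<in> C4_copies V E. {v,x} \<in> C}"
    using finite_C4_copies[OF fin] by (intro card_inj_on_le) auto
  moreover have "card (Sigma Y Z) = (\<Sum>y\<in>Y. card (Z y))"
    using finite_subset[OF \<open>Y \<subseteq> V\<close> fin] by (rule card_SigmaI) (simp add: Z_def fin)
  moreover have "card Y * m \<le> (\<Sum>y\<in>Y. card (Z y))"
    using sum_bounded_below[of Y m "\<lambda>y. card (Z y)"] card_Z by simp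
  ultimately show ?thesis by linarith
qed

definition labelled_C4s :: "'a set \<Rightarrow> ('a \<Rightarrow> 'a \<Rightarrow> bool) \<Rightarrow> ('a \<times> 'a \<times> 'a \<times> 'a) set" where
  "labelled_C4s V E = {(v,x,y,z). v \<in> V \<and> x \<in> V \<and> y \<in> V \<and> z \<in> V \<and> distinct [v,x,y,z]
     \<and> E v x \<and> E x y \<and> E y z \<and> E z v \<and> codegree V E x z \<le> codegree V E v y}"

lemma finite_labelled_C4s: "finite V \<Longrightarrow> finite (labelled_C4s V E)"
  by (rule finite_subset[of _ "V \<times> V \<times> V \<times> V"]) (auto simp: labelled_C4s_def)

lemma four_card_C4_copies_le:
  assumes G: "simple_graph V E"
  shows "4 * card (C4_copies V E) \<le> card (labelled_C4s V E)"
proof -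
  let ?f = "\<lambda>(v,x,y,z). cycle4 v x y z"
  have fin: "finite V" and sym: "\<And>a b. E a b \<Longrightarrow> E b a"
    using G by (auto simp: simple_graph_def)
  have into: "?f ` labelled_C4s V E \<subseteq> C4_copies V E"
    by (auto simp: labelled_C4s_def intro: cycle4_in_C4_copies)
  have fibre: "4 \<le> card {t \<in> labelled_C4s V E. ?f t = C}" if C: "C \<in> C4_copies V E" for C
  proof -
    obtain v x y z where t: "(v,x,y,z) \<in> labelled_C4s V E" "cycle4 v x y z = C"
    proof -
      from C obtain a b c d where abcd: "C = cycle4 a b c d" "a \<in> V" "b \<in> V" "c \<in> V"
        "d \<in> V" "distinct [a,b,c,d]" "E a b" "E b c" "E c d" "E d a"
        by (rule C4_copiesE)
      show thesis
      proof (cases "codegree V E b d \<le> codegree V E a c")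
        case True
        with abcd show thesis by (intro that[of a b c d]) (auto simp: labelled_C4s_def)
      next
        case False
        with abcd show thesis
          by (intro that[of b c d a]) (auto simp: labelled_C4s_def codegree_commute cycle4_rotate[of a])
      qed
    qed
    have "cycle4 v z y x = C" "cycle4 y x v z = C" "cycle4 y z v x = C"
      using t(2) cycle4_rotate cycle4_reverse by metis+
    then have sub: "{(v,x,y,z), (v,z,y,x), (y,x,v,z), (y,z,v,x)} \<subseteq> {t \<in> labelled_C4s V E. ?f t = C}"
      using t sym by (auto simp: labelled_C4s_def codegree_commute)
    have "4 = card {(v,x,y,z), (v,z,y,x), (y,x,v,z), (y,z,v,x)}"
      using t(1) by (auto simp: labelled_C4s_def)
    also have "\<dots> \<le> card {t \<in> labelled_C4s V E. ?f t = C}"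
      by (rule card_mono[OF _ sub]) (use finite_labelled_C4s[OF fin] in simp)
    finally show ?thesis .
  qed
  have "card (labelled_C4s V E) = (\<Sum>C\<in>C4_copies V E. card {t \<in> labelled_C4s V E. ?f t = C})"
    by (rule card_eq_sum_card_fibres[OF finite_labelled_C4s[OF fin] finite_C4_copies[OF fin] into])
  also have "\<dots> \<ge> (\<Sum>C\<in>C4_copies V E. 4)" by (rule sum_mono) (rule fibre)
  finally show ?thesis by simp
qed

definition dyadic_level :: "nat \<Rightarrow> nat" where
  "dyadic_level d = (LEAST k. d \<le> 4 ^ k)"

lemma le_four_power_dyadic_level: "d \<le> 4 ^ dyadic_level d"
proof -
  have "d \<le> 4 ^ d"
    using less_exp[of d] power_mono[of 2 4 d] by simp
  then show ?thesis unfolding dyadic_level_def by (rule LeastI)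
qed

lemma four_power_less_if_less_dyadic_level: "k < dyadic_level d \<Longrightarrow> 4 ^ k < d"
  unfolding dyadic_level_def using not_less_Least by (metis not_le)

lemma dyadic_level_mono: "d \<le> d' \<Longrightarrow> dyadic_level d \<le> dyadic_level d'"
  unfolding dyadic_level_def
  by (rule Least_le) (use le_four_power_dyadic_level[of d', unfolded dyadic_level_def] in simp)

lemma dyadic_level_pos: "1 < d \<Longrightarrow> 0 < dyadic_level d"
  using le_four_power_dyadic_level[of d] by (cases "dyadic_level d") auto

lemma dyadic_level_le_ln:
  assumes "3 \<le> n"
  shows "real (dyadic_level n + 1) \<le> 4 * ln (real n)"
proof -
  have ln_n: "1 \<le> ln (real n)"
    using assms exp_le by (subst ln_ge_iff) auto
  have "1 \<le> ln (4::real)"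
    using exp_le by (subst ln_ge_iff) auto
  have "0 < dyadic_level n" using assms by (intro dyadic_level_pos) simp
  then have "4 ^ (dyadic_level n - 1) < n"
    by (intro four_power_less_if_less_dyadic_level) simp
  then have "real (4 ^ (dyadic_level n - 1)) < real n"
    by (simp only: of_nat_less_iff)
  then have "real (dyadic_level n - 1) * ln 4 < ln (real n)"
    by (simp add: ln_realpow[symmetric])
  with \<open>1 \<le> ln 4\<close> have "real (dyadic_level n - 1) < ln (real n)"
    by (smt (verit) mult_le_cancel_left1 of_nat_0_le_iff)
  with \<open>0 < dyadic_level n\<close> ln_n show ?thesis by (simp add: of_nat_diff)
qed

definition level_class :: "'a set \<Rightarrow> ('a \<Rightarrow> 'a \<Rightarrow> bool) \<Rightarrow> 'a \<Rightarrow> nat \<Rightarrow> ('a \<times> 'a \<times> 'a) set" where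
  "level_class V E v k =
     {(x,y,z). (v,x,y,z) \<in> labelled_C4s V E \<and> dyadic_level (codegree V E v y) = k}"

lemma exists_large_level_class:
  assumes "finite V" "V \<noteq> {}"
  obtains v k where "v \<in> V"
    "card (labelled_C4s V E) \<le> card V * (dyadic_level (card V) + 1) * card (level_class V E v k)"
proof -
  let ?key = "\<lambda>(v,x,y,z). (v, dyadic_level (codegree V E v y))"
  let ?P = "V \<times> {..dyadic_level (card V)}"
  have "finite ?P" "?P \<noteq> {}" using assms by auto
  moreover have "?key ` labelled_C4s V E \<subseteq> ?P"
    using dyadic_level_mono[OF codegree_le_card[OF \<open>finite V\<close>]]
    by (auto simp: labelled_C4s_def)
  ultimately obtain p where "p \<in> ?P"
    and big: "card (labelled_C4s V E) \<le> card ?P * card {t \<in> labelled_C4s V E. ?key t = p}"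
    by (rule exists_large_fibre[OF finite_labelled_C4s[OF \<open>finite V\<close>]])
  obtain v k where p: "p = (v, k)" by (cases p)
  have "{t \<in> labelled_C4s V E. ?key t = p} = Pair v ` level_class V E v k"
    by (auto simp: p level_class_def image_iff)
  then have "card {t \<in> labelled_C4s V E. ?key t = p} = card (level_class V E v k)"
    by (simp add: card_image inj_on_def)
  moreover have "card ?P = card V * (dyadic_level (card V) + 1)"
    by (simp add: card_cartesian_product)
  ultimately show thesis
    using that[of v k] \<open>p \<in> ?P\<close> big p by auto
qed

lemma symmetric_level_class:
  assumes "simple_graph V E"
  shows "symmetric_triples (level_class V E v k)"
  using assms
  by (auto simp: symmetric_triples_def level_class_def labelled_C4s_def simple_graph_def
      codegree_commute)

lemma level_class_codegree_le:
  assumes "(x,y,z) \<in> level_class V E v k"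
  shows "codegree V E v y \<le> 4 ^ k" "codegree V E x z \<le> 4 ^ k"
  using assms le_four_power_dyadic_level[of "codegree V E v y"]
  by (auto simp: level_class_def labelled_C4s_def)

lemma card_level_class_neighbours_le:
  assumes G: "simple_graph V E" and "0 \<le> B"
    and edge: "\<And>a b. E a b \<Longrightarrow> real (card {C \<in> C4_copies V E. {a,b} \<in> C}) \<le> B"
  shows "real (card {y \<in> V. \<exists>z\<in>V. (x,y,z) \<in> level_class V E v k}) * 4 ^ k \<le> 4 * B"
proof (cases "{y \<in> V. \<exists>z\<in>V. (x,y,z) \<in> level_class V E v k} = {}")
  case False
  define Y where "Y = {y \<in> V. \<exists>z\<in>V. (x,y,z) \<in> level_class V E v k}"
  have sym: "\<And>a b. E a b \<Longrightarrow> E b a" and fin: "finite V"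
    using G by (simp_all add: simple_graph_def)
  from False obtain y z where yz: "(x,y,z) \<in> level_class V E v k" by auto
  then have "E v x" by (simp add: level_class_def labelled_C4s_def)
  have "{x,z} \<subseteq> {w \<in> V. E v w \<and> E y w}" "card {x,z} = 2"
    using yz sym[of x y] sym[of z v] by (auto simp: level_class_def labelled_C4s_def)
  then have "1 < codegree V E v y"
    unfolding codegree_def using card_mono[of "{w \<in> V. E v w \<and> E y w}" "{x,z}"] fin by simp
  moreover have "dyadic_level (codegree V E v y) = k"
    using yz by (simp add: level_class_def)
  ultimately have "0 < k" using dyadic_level_pos by blast
  then obtain j where k: "k = Suc j" using gr0_conv_Suc by blast
  have "card Y * 4 ^ j \<le> card {C \<in> C4_copies V E. {v,x} \<in> C}"
  proof (rule card_mult_le_card_C4_copies_edge[OF G \<open>E v x\<close>])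
    fix y assume "y \<in> Y"
    then obtain z where "(x,y,z) \<in> level_class V E v k" by (auto simp: Y_def)
    then show "E x y \<and> y \<noteq> v \<and> 4 ^ j < codegree V E v y"
      using four_power_less_if_less_dyadic_level[of j "codegree V E v y"]
      by (auto simp: level_class_def labelled_C4s_def k)
  qed (auto simp: Y_def)
  then have "real (card Y * 4 ^ j) \<le> real (card {C \<in> C4_copies V E. {v,x} \<in> C})"
    by (simp only: of_nat_le_iff)
  with edge[OF \<open>E v x\<close>] show ?thesis by (simp add: Y_def k)
next
  case True
  show ?thesis unfolding True using \<open>0 \<le> B\<close> by simp
qed

lemma card_C4_copies_div_le:
  assumes G: "simple_graph V E" and n: "3 \<le> card V"
    and big: "card (labelled_C4s V E) \<le> card V * (dyadic_level (card V) + 1) * d"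
  shows "real (card (C4_copies V E)) / (real (card V) * ln (real (card V))) \<le> real d"
proof -
  let ?n = "real (card V)" and ?q = "real (card (C4_copies V E))"
  have "4 * card (C4_copies V E) \<le> card V * (dyadic_level (card V) + 1) * d"
    using four_card_C4_copies_le[OF G] big by linarith
  then have "4 * ?q \<le> ?n * real (dyadic_level (card V) + 1) * real d"
    by (metis of_nat_le_iff of_nat_mult of_nat_numeral)
  also have "\<dots> \<le> ?n * (4 * ln ?n) * real d"
    using dyadic_level_le_ln[OF n] by (intro mult_right_mono mult_left_mono) auto
  finally show ?thesis
    using n by (simp add: pos_divide_le_eq algebra_simps)
qed

lemma exists_C4_level_class:
  assumes G: "simple_graph V E" and "3 \<le> card V" and "0 \<le> B"
    and edge: "\<And>a b. E a b \<Longrightarrow> real (card {C \<in> C4_copies V E. {a,b} \<in> C}) \<le> B"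
  obtains v k where "v \<in> V"
    "real (card (C4_copies V E)) / (real (card V) * ln (real (card V)))
       \<le> real (card (level_class V E v k))"
    "\<And>x. real (card {y \<in> V. \<exists>z\<in>V. (x,y,z) \<in> level_class V E v k}) * 4 ^ k \<le> 4 * B"
proof -
  have "finite V" "V \<noteq> {}"
    using G \<open>3 \<le> card V\<close> by (auto simp: simple_graph_def)
  then obtain v k where "v \<in> V"
    "card (labelled_C4s V E) \<le> card V * (dyadic_level (card V) + 1) * card (level_class V E v k)"
    by (rule exists_large_level_class)
  with that card_C4_copies_div_le[OF G \<open>3 \<le> card V\<close>]
    card_level_class_neighbours_le[OF G \<open>0 \<le> B\<close> edge]
  show thesis by blast
qed

theorem lemma2p18:
  fixes \<epsilon> K :: real
  assumes "0 < \<epsilon>" "\<epsilon> < 1/6" "0 < K"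
  shows "\<exists>N::nat. \<forall>n\<ge>N. \<forall>(E :: nat \<Rightarrow> nat \<Rightarrow> bool) (q :: nat).
    simple_graph {..<n} E \<longrightarrow>
    (\<forall>v<n. real (degree {..<n} E v) \<le> K * real n powr (1/3 + \<epsilon>)) \<longrightarrow>
    q = card (C4_copies {..<n} E) \<longrightarrow>
    (\<forall>a b. E a b \<longrightarrow>
       real (card {C \<in> C4_copies {..<n} E. {a,b} \<in> C})
         \<le> 96 * ln (real n) / real n powr (4/3 + \<epsilon>) * real q) \<longrightarrow>
    (\<exists>v<n. \<exists>s::real. s > 0 \<and> (\<exists>D \<subseteq> {..<n} \<times> {..<n} \<times> {..<n}.
       symmetric_triples D \<and>
       real (card D) \<ge> real q / (real n * ln (real n)) \<and>
       (\<forall>(x,y,z) \<in> D. distinct [v,x,y,z] \<and> E v x \<and> E x y \<and> E y z \<and> E z v) \<and>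
       (\<forall>(x,y,z) \<in> D. real (codegree {..<n} E v y) \<le> s \<and> real (codegree {..<n} E x z) \<le> s) \<and>
       (\<forall>x<n. real (card {y \<in> {..<n}. \<exists>z<n. (x,y,z) \<in> D})
          \<le> 384 * ln (real n) * real q / (real n powr (4/3 + \<epsilon>) * s))))"
proof (rule exI[of _ 3], intro allI impI, goal_cases)
  case (1 n E q)
  note G = "1"(2) and q = "1"(4) and edge = "1"(5)
  let ?B = "96 * ln (real n) / real n powr (4/3 + \<epsilon>) * real q"
  have "3 \<le> card {..<n}" "0 \<le> ?B"
    using "1"(1) by simp_all
  then obtain v k where "v \<in> {..<n}"
    and big: "real q / (real (card {..<n}) * ln (real (card {..<n})))
      \<le> real (card (level_class {..<n} E v k))"
    and few: "\<And>x.
      real (card {y \<in> {..<n}. \<exists>z\<in>{..<n}. (x,y,z) \<in> level_class {..<n} E v k}) * 4 ^ k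
        \<le> 4 * ?B"
    unfolding q by (rule exists_C4_level_class[OF G]) (use edge q in auto)
  show ?case
  proof (intro exI[of _ v] exI[of _ "4 ^ k"] exI[of _ "level_class {..<n} E v k"] conjI allI impI)
    show "symmetric_triples (level_class {..<n} E v k)"
      by (rule symmetric_level_class[OF G])
    show "real (card {y \<in> {..<n}. \<exists>z<n. (x,y,z) \<in> level_class {..<n} E v k})
      \<le> 384 * ln (real n) * real q / (real n powr (4/3 + \<epsilon>) * 4 ^ k)" if "x < n" for x
      using few[of x] that by (simp add: Bex_def pos_le_divide_eq field_simps)
    show "\<forall>(x,y,z) \<in> level_class {..<n} E v k.
      real (codegree {..<n} E v y) \<le> 4 ^ k \<and> real (codegree {..<n} E x z) \<le> 4 ^ k"
      using level_class_codegree_le by (fastforce simp flip: of_nat_le_iff)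
  qed (use \<open>v \<in> {..<n}\<close> big in \<open>auto simp: level_class_def labelled_C4s_def\<close>)
qed

end
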